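(* Let $q$ be a prime power and $n\geq 7$. Then either $(n,q)\in\{(10,2),(9,2),(8,3),(8,2),(7,3),(7,2)\}$, or there exist distinct primes $r,s>n+2$ dividing $N=\prod_{i=1}^{m}(q^{2i}-1)$, where $m=\lceil (n-2)/2\rceil$. *)

theory Defs
  imports Complex_Main "HOL-Computational_Algebra.Primes"
begin

definition prime_power :: "nat \<Rightarrow> bool" where
  "prime_power q \<longleftrightarrow> (\<exists>p k. prime p \<and> k \<ge> 1 \<and> q = p ^ k)"

end

theory Submission
  imports Defs "HOL-Number_Theory.Number_Theory"
begin

text \<open>
  Put \<open>m = \<lceil>(n - 2) / 2\<rceil>\<close>, so that \<open>n + 2 \<le> 2 * m + 4\<close>. If \<open>q\<close> has order \<open>k\<close> modulo a
  prime \<open>p\<close>, then \<open>k\<close> divides \<open>p - 1\<close>, and \<open>p\<close> divides \<open>N\<close> as soon as \<open>k\<close> divides some \<open>2 * i\<close>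
  with \<open>i \<le> m\<close>. For even \<open>k\<close> with \<open>m + 2 \<le> k \<le> 2 * m\<close> and \<open>k mod 3 = 2\<close>, the prime \<open>p\<close>
  cannot be \<open>k + 1\<close>, a multiple of \<open>3\<close>, so \<open>p \<ge> 2 * k + 1 > 2 * m + 4\<close>. It therefore
  suffices to find two such \<open>k\<close> for which \<open>q ^ k - 1\<close> has a primitive prime divisor.

  These come from a weak Zsigmondy theorem: if \<open>q ^ k - 1\<close> has no primitive prime divisor,
  each of its prime factors divides some \<open>q ^ (k div r) - 1\<close> with \<open>r\<close> a prime factor of \<open>k\<close>,
  and lifting the exponent shows that \<open>q ^ k - 1\<close> divides \<open>k * (\<Prod>r. q ^ (k div r) - 1)\<close>,
  which is impossible when the right-hand side is smaller. For \<open>m \<ge> 10\<close> two orders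
  \<open>k = 2 ^ a * c\<close> with \<open>c\<close> prime are found in dyadic blocks (and by hand for \<open>m < 32\<close>).
  For \<open>3 \<le> m \<le> 9\<close> small orders and the congruence \<open>p mod k = 1\<close> are used directly; the
  last obstruction, at \<open>m = 3\<close>, is that \<open>q\<^sup>2 - 1\<close> might have no prime factors besides \<open>2\<close>
  and \<open>3\<close>, which forces \<open>q \<in> {2, 3, 5, 7, 17}\<close>.
\<close>

section \<open>Lifting the exponent\<close>

lemma pow_minus_one_eq_mult_sum_nat:
  fixes x :: nat
  assumes "x \<ge> 1"
  shows "x ^ r - 1 = (x - 1) * (\<Sum>i<r. x ^ i)"
proof -
  have "int (x ^ r - 1) = (int x - 1) * (\<Sum>i<r. int x ^ i)"
    using assms by (simp add: of_nat_diff power_diff_1_eq)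
  also have "\<dots> = int ((x - 1) * (\<Sum>i<r. x ^ i))"
    using assms by (simp add: of_nat_diff)
  finally show ?thesis by (simp only: of_nat_eq_iff)
qed

lemma square_minus_one_eq_nat:
  fixes x :: nat
  shows "x\<^sup>2 - 1 = (x - 1) * (x + 1)"
  by (cases x) (simp_all add: power2_eq_square algebra_simps)

lemma sum_powers_cong_card:
  fixes x p :: nat
  assumes "[x = 1] (mod p)"
  shows "[(\<Sum>i<r. x ^ i) = r] (mod p)"
proof -
  have "[(\<Sum>i<r. x ^ i) = (\<Sum>i<r. 1)] (mod p)"
    using assms by (intro cong_sum) (metis cong_pow power_one)
  then show ?thesis by simp
qed

lemma one_plus_mult_pow_cong:
  fixes t p :: nat
  shows "[(1 + t * p) ^ i = 1 + i * t * p] (mod p^2)"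
proof (induction i)
  case (Suc i)
  have "[(1 + t * p) ^ Suc i = (1 + i * t * p) * (1 + t * p)] (mod p^2)"
    using cong_mult[OF Suc cong_refl[of "1 + t * p"]] by (simp add: mult.commute)
  also have "(1 + i * t * p) * (1 + t * p) = (1 + Suc i * t * p) + (i * t * t) * p^2"
    by (simp add: algebra_simps power2_eq_square)
  also have "[\<dots> = 1 + Suc i * t * p] (mod p^2)"
    by (simp add: cong_def)
  finally show ?case .
qed simp

lemma sum_powers_not_sq_dvd:
  fixes x p :: nat
  assumes p: "prime p" "odd p" and x: "[x = 1] (mod p)"
  shows "\<not> p^2 dvd (\<Sum>i<p. x ^ i)"
proof
  assume dvd: "p^2 dvd (\<Sum>i<p. x ^ i)"
  obtain t where t: "x = 1 + t * p"
    using x p(1) cong_to_1'_nat[of x p] by auto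
  have gauss: "(\<Sum>i<p. i) = p * ((p - 1) div 2)"
  proof -
    have "2 * (\<Sum>i<p. i) = p * (p - 1)"
      by (induction p) (auto simp: algebra_simps)
    with p(2) show ?thesis by (elim oddE) simp
  qed
  have "[(\<Sum>i<p. x ^ i) = (\<Sum>i<p. 1 + i * t * p)] (mod p^2)"
    unfolding t by (intro cong_sum one_plus_mult_pow_cong)
  also have "(\<Sum>i<p. 1 + i * t * p) = p + (\<Sum>i<p. i) * (t * p)"
    unfolding sum.distrib by (simp add: sum_distrib_right mult.assoc)
  also have "\<dots> = p + p^2 * (t * ((p - 1) div 2))"
    by (simp add: gauss power2_eq_square algebra_simps)
  also have "[\<dots> = p] (mod p^2)"
    by (simp add: cong_def)
  finally have "p^2 dvd p"
    using dvd cong_dvd_iff by blast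
  then show False
    using p(1) by (auto simp: power2_eq_square dest: prime_gt_1_nat)
qed

lemma multiplicity_pow_prime_minus_one_le:
  fixes x p r :: nat
  assumes p: "prime p" and r: "prime r" and x: "x \<ge> 1" and px: "p dvd x - 1"
    and four: "p = 2 \<Longrightarrow> r = 2 \<Longrightarrow> 4 dvd x - 1"
  shows "multiplicity p (x ^ r - 1) \<le> multiplicity p (x - 1) + multiplicity p r"
proof (cases "x = 1")
  case False
  define S where "S = (\<Sum>i<r. x ^ i)"
  have x_cong: "[x = 1] (mod p)"
    using px x by (simp add: cong_altdef_nat)
  have "S \<noteq> 0"
    using prime_gt_0_nat[OF r] by (auto simp: S_def sum_eq_0_iff)
  moreover have "x ^ r - 1 = (x - 1) * S"
    unfolding S_def using x by (rule pow_minus_one_eq_mult_sum_nat)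
  ultimately have split: "multiplicity p (x ^ r - 1) = multiplicity p (x - 1) + multiplicity p S"
    using p x False by (simp add: prime_elem_multiplicity_mult_distrib)
  have "multiplicity p S \<le> multiplicity p r"
  proof (cases "p = r")
    case False
    have "\<not> p dvd r"
      using False p r primes_dvd_imp_eq by blast
    then have "\<not> p dvd S"
      using cong_dvd_iff[OF sum_powers_cong_card[OF x_cong, of r]] by (simp add: S_def)
    then show ?thesis
      by (simp add: not_dvd_imp_multiplicity_0)
  next
    case True
    have "\<not> p^2 dvd S"
    proof (cases "p = 2")
      case True
      obtain j where "x - 1 = 4 * j"
        using four True \<open>p = r\<close> by blast
      then have "S = 4 * j + 2"
        using True \<open>p = r\<close> x by (simp add: S_def numeral_2_eq_2)
      then show ?thesis
        using True by simp presburger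
    next
      case False
      then have "odd p"
        using prime_odd_nat[OF p] prime_ge_2_nat[OF p] by simp
      then show ?thesis
        using sum_powers_not_sq_dvd[OF p _ x_cong] \<open>p = r\<close> by (simp add: S_def)
    qed
    then have "multiplicity p S < 2"
      using \<open>S \<noteq> 0\<close> p by (intro multiplicity_lessI) (auto simp: prime_nat_iff)
    then show ?thesis
      using True p by simp
  qed
  then show ?thesis
    using split by simp
qed simp

section \<open>Primitive prime divisors\<close>

lemma prime_dvd_pow_minus_one_iff:
  fixes p q j :: nat
  assumes "q > 0"
  shows "p dvd q ^ j - 1 \<longleftrightarrow> ord p q dvd j"
proof -
  have "q ^ j \<ge> 1"
    using assms by simp
  then show ?thesis
    by (simp flip: cong_altdef_nat add: ord_divides')
qed

lemma ord_dvd_prime_minus_one: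
  fixes p q k :: nat
  assumes p: "prime p" and ord: "ord p q = k" and k: "k > 0"
  shows "k dvd p - 1"
proof -
  have "coprime q p"
    using ord k by (simp add: coprime_commute flip: ord_gt_0_iff)
  then have "[q ^ totient p = 1] (mod p)"
    by (rule euler_theorem)
  then show ?thesis
    using p ord by (simp add: ord_divides' totient_prime)
qed

lemma exists_prime_factor_ord_dvd:
  fixes p q k :: nat
  assumes q: "q > 0" and k: "k > 0" and p: "p dvd q ^ k - 1" and ord: "ord p q \<noteq> k"
  shows "\<exists>r\<in>prime_factors k. p dvd q ^ (k div r) - 1"
proof -
  obtain j where j: "k = ord p q * j"
    using p prime_dvd_pow_minus_one_iff[OF q] by blast
  have "j \<noteq> 1"
    using ord j by auto
  then obtain r where r: "prime r" "r dvd j"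
    using prime_factor_nat by blast
  then obtain s where s: "j = r * s"
    by blast
  have "r \<in> prime_factors k"
    using r k j by (auto simp: in_prime_factors_iff)
  moreover have "k div r = ord p q * s"
    using j s prime_gt_0_nat[OF r(1)] by simp
  then have "p dvd q ^ (k div r) - 1"
    using prime_dvd_pow_minus_one_iff[OF q] by simp
  ultimately show ?thesis
    by blast
qed

lemma four_dvd_odd_square_minus_one:
  fixes y :: nat
  assumes "odd y"
  shows "4 dvd y^2 - 1"
proof -
  obtain s where "y = 2 * s + 1"
    using assms oddE by blast
  then have "y^2 - 1 = 4 * (s * s + s)"
    by (simp add: power2_eq_square algebra_simps)
  then show ?thesis
    by simp
qed

text \<open>For \<open>p = 2\<close> the prime \<open>r\<close> has to be chosen so that the lifting lemma applies:
  either \<open>r\<close> is odd, or \<open>q ^ (k div 2)\<close> is an odd square.\<close>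

lemma exists_prime_factor_for_lifting:
  fixes p q k :: nat
  assumes q: "q > 0" and k: "k > 0" "k \<noteq> 2" and p: "prime p" "p dvd q ^ k - 1"
    and ord: "ord p q \<noteq> k"
  shows "\<exists>r\<in>prime_factors k. p dvd q ^ (k div r) - 1 \<and>
           (p = 2 \<longrightarrow> r = 2 \<longrightarrow> 4 dvd q ^ (k div r) - 1)"
proof (cases "p = 2")
  case False
  then show ?thesis
    using exists_prime_factor_ord_dvd[OF q k(1) p(2) ord] by blast
next
  case True
  obtain r0 where r0: "r0 \<in> prime_factors k"
    using exists_prime_factor_ord_dvd[OF q k(1) p(2) ord] by blast
  have "odd q"
    using p(2) True k(1) q by auto
  then have even_pow_minus_one: "2 dvd q ^ d - 1" for d
    by simp
  show ?thesis
  proof (cases "4 dvd k")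
    case True
    then obtain h where h: "k div 2 = 2 * h"
      by (auto elim!: dvdE)
    have "4 dvd (q ^ h)^2 - 1"
      using \<open>odd q\<close> by (intro four_dvd_odd_square_minus_one) simp
    then have "4 dvd q ^ (k div 2) - 1"
      by (simp add: h power_mult mult.commute)
    moreover have "2 \<in> prime_factors k"
      using True k(1) by (auto simp: in_prime_factors_iff intro: dvd_trans[of 2 4])
    ultimately show ?thesis
      using even_pow_minus_one \<open>p = 2\<close> by blast
  next
    case False
    obtain j where j: "odd j" "j dvd k" "j \<noteq> 1"
    proof (cases "even k")
      case True
      then obtain j where "k = 2 * j" by blast
      then show ?thesis
        using that[of j] False k(2) by auto
    next
      case False
      have "k \<noteq> 1"
        using r0 by (auto simp: in_prime_factors_iff)
      with False show ?thesis
        using that[of k] by simp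
    qed
    then obtain r where r: "prime r" "r dvd j"
      using prime_factor_nat by blast
    then have "r \<in> prime_factors k" "r \<noteq> 2"
      using j k(1) dvd_trans[of r j k] by (auto simp: in_prime_factors_iff)
    then show ?thesis
      using even_pow_minus_one \<open>p = 2\<close> by blast
  qed
qed

lemma prod_pow_div_prime_factors_pos:
  fixes q k :: nat
  assumes "q \<ge> 2"
  shows "(\<Prod>r\<in>prime_factors k. q ^ (k div r) - 1) > 0"
proof (rule prod_pos)
  fix r
  assume "r \<in> prime_factors k"
  then have "k div r > 0"
    by (auto simp: in_prime_factors_iff div_greater_zero_iff dvd_imp_le prime_gt_0_nat)
  then have "q \<le> q ^ (k div r)"
    using assms by (simp add: self_le_power)
  then show "q ^ (k div r) - 1 > 0"
    using assms by auto
qed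

text \<open>A primitive prime divisor of \<open>q ^ k - 1\<close> is a prime \<open>p\<close> with \<open>ord p q = k\<close>. Without one,
  every prime \<open>p\<close> of \<open>q ^ k - 1\<close> divides some \<open>q ^ (k div r) - 1\<close>, and lifting the exponent
  bounds its multiplicity accordingly.\<close>

lemma pow_minus_one_dvd_if_no_primitive_prime_divisor:
  fixes q k :: nat
  assumes q: "q \<ge> 2" and k: "k \<noteq> 2" and no_prim: "\<nexists>p. prime p \<and> ord p q = k"
  shows "q ^ k - 1 dvd k * (\<Prod>r\<in>prime_factors k. q ^ (k div r) - 1)"
proof (cases "k = 0")
  case False
  define P where "P = (\<Prod>r\<in>prime_factors k. q ^ (k div r) - 1)"
  have "P > 0"
    unfolding P_def using q by (rule prod_pow_div_prime_factors_pos)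
  have "q ^ k > 1"
    using q False by (intro one_less_power) auto
  show ?thesis
    unfolding P_def[symmetric]
  proof (rule multiplicity_le_imp_dvd)
    show "q ^ k - 1 \<noteq> 0"
      using \<open>q ^ k > 1\<close> by simp
  next
    fix p :: nat
    assume p: "prime p"
    show "multiplicity p (q ^ k - 1) \<le> multiplicity p (k * P)"
    proof (cases "p dvd q ^ k - 1")
      case False
      then show ?thesis
        by (simp add: not_dvd_imp_multiplicity_0)
    next
      case True
      then obtain r where r: "r \<in> prime_factors k" "p dvd q ^ (k div r) - 1"
          "p = 2 \<longrightarrow> r = 2 \<longrightarrow> 4 dvd q ^ (k div r) - 1"
        using exists_prime_factor_for_lifting[of q k p] q k \<open>k \<noteq> 0\<close> p no_prim by auto
      then have "prime r" "r dvd k"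
        by auto
      then have "q ^ k - 1 = (q ^ (k div r)) ^ r - 1"
        by (simp flip: power_mult)
      also have "multiplicity p \<dots> \<le> multiplicity p (q ^ (k div r) - 1) + multiplicity p r"
        using q r by (intro multiplicity_pow_prime_minus_one_le[OF p \<open>prime r\<close>]) auto
      also have "\<dots> \<le> multiplicity p P + multiplicity p k"
      proof (rule add_mono)
        show "multiplicity p (q ^ (k div r) - 1) \<le> multiplicity p P"
          using r(1) \<open>P > 0\<close> unfolding P_def by (intro dvd_imp_multiplicity_le dvd_prodI) auto
        show "multiplicity p r \<le> multiplicity p k"
          using \<open>r dvd k\<close> False by (intro dvd_imp_multiplicity_le) auto
      qed
      also have "\<dots> = multiplicity p (k * P)"
        using p \<open>P > 0\<close> False by (simp add: prime_elem_multiplicity_mult_distrib)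
      finally show ?thesis .
    qed
  qed
qed simp

theorem exists_primitive_prime_divisor_if_prod_less:
  fixes q k :: nat
  assumes q: "q \<ge> 2" and k: "k \<noteq> 2"
    and less: "k * (\<Prod>r\<in>prime_factors k. q ^ (k div r) - 1) < q ^ k - 1"
  shows "\<exists>p. prime p \<and> ord p q = k"
proof (rule ccontr)
  assume "\<nexists>p. prime p \<and> ord p q = k"
  then have "q ^ k - 1 dvd k * (\<Prod>r\<in>prime_factors k. q ^ (k div r) - 1)"
    using pow_minus_one_dvd_if_no_primitive_prime_divisor q k by blast
  moreover have "k > 0"
    using less by (cases k) auto
  then have "k * (\<Prod>r\<in>prime_factors k. q ^ (k div r) - 1) > 0"
    using prod_pow_div_prime_factors_pos[OF q] by simp
  ultimately show False
    using less by (auto dest: dvd_imp_le)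
qed

lemma less_two_pow_pred:
  fixes n :: nat
  assumes "n \<ge> 3"
  shows "n < 2 ^ (n - 1)"
  using assms
proof (induction n rule: dec_induct)
  case (step n)
  then show ?case
    by (cases n) auto
qed simp

corollary exists_primitive_prime_divisor_if_less_two_pow:
  fixes q k :: nat
  assumes q: "q \<ge> 2" and k: "k \<ge> 2"
    and less: "k < 2 ^ (k - (\<Sum>r\<in>prime_factors k. k div r))"
  shows "\<exists>p. prime p \<and> ord p q = k"
proof (rule exists_primitive_prime_divisor_if_prod_less[OF q])
  define S where "S = (\<Sum>r\<in>prime_factors k. k div r)"
  define P where "P = (\<Prod>r\<in>prime_factors k. q ^ (k div r) - 1)"
  have less_S: "k < 2 ^ (k - S)"
    unfolding S_def by (fact less)
  obtain r0 where "prime r0" "r0 dvd k"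
    using k prime_factor_nat[of k] by auto
  then have r0: "r0 \<in> prime_factors k" and "k div r0 > 0"
    using k by (auto simp: in_prime_factors_iff div_greater_zero_iff dvd_imp_le prime_gt_0_nat)
  then have "P < (\<Prod>r\<in>prime_factors k. q ^ (k div r))"
    unfolding P_def using q by (intro prod_mono_strict[of r0]) auto
  then have P_less: "P < q ^ S"
    by (simp add: S_def power_sum)
  have "S \<ge> k div r0"
    unfolding S_def using r0 by (intro member_le_sum) auto
  then have "(2::nat) ^ (k - S) \<le> 2 ^ (k - 1)"
    using \<open>k div r0 > 0\<close> by (intro power_increasing) auto
  then have "k < 2 ^ (k - 1)"
    using less_S by linarith
  then show "k \<noteq> 2"
    by auto
  have S_less: "S < k"
    using less_S k by (cases "S < k") auto
  have "k * q ^ S < 2 ^ (k - S) * q ^ S"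
    using less_S q by simp
  also have "\<dots> \<le> q ^ (k - S) * q ^ S"
    using q by (simp add: power_mono)
  also have "\<dots> = q ^ k"
    using S_less by (simp flip: power_add)
  finally have "k * q ^ S < q ^ k" .
  moreover have "k * (P + 1) \<le> k * q ^ S"
    using P_less by (intro mult_le_mono2) simp
  ultimately show "k * P < q ^ k - 1"
    using k by (simp add: P_def algebra_simps)
qed

lemma prime_factors_two_pow:
  assumes "a > 0"
  shows "prime_factors ((2::nat) ^ a) = {2}"
  using assms by (simp add: prime_factorization_prime_power)

lemma prime_factors_two_pow_mult_prime:
  fixes c :: nat
  assumes "prime c" "a > 0"
  shows "prime_factors (2 ^ a * c) = {2, c}"
  using assms by (simp add: prime_factors_product prime_factors_two_pow prime_prime_factors insert_commute)

lemma exists_primitive_prime_divisor_two_pow_mult_prime: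
  fixes q a c :: nat
  assumes q: "q \<ge> 2" and c: "prime c" "c \<noteq> 2" and a: "a > 0"
    and less: "2 ^ a * c < 2 ^ (2 ^ (a - 1) * (c - 2))"
  shows "\<exists>p. prime p \<and> ord p q = 2 ^ a * c"
proof (rule exists_primitive_prime_divisor_if_less_two_pow[OF q])
  obtain b where b: "a = Suc b"
    using a by (cases a) auto
  have "c > 2"
    using c prime_ge_2_nat[of c] by linarith
  then show "2 \<le> 2 ^ a * c"
    using a by (simp add: b)
  have "(\<Sum>r\<in>prime_factors (2 ^ a * c). 2 ^ a * c div r) = 2 ^ a * c div 2 + 2 ^ a * c div c"
    using c by (simp add: prime_factors_two_pow_mult_prime[OF c(1) a])
  also have "\<dots> = 2 ^ b * c + 2 ^ a"
    using c by (simp add: b prime_gt_0_nat)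
  moreover have "2 ^ a * c - (2 ^ b * c + 2 ^ a) = 2 ^ b * (c - 2)"
    using \<open>c > 2\<close> by (simp add: b algebra_simps diff_mult_distrib2)
  ultimately show "2 ^ a * c < 2 ^ (2 ^ a * c - (\<Sum>r\<in>prime_factors (2 ^ a * c). 2 ^ a * c div r))"
    using less by (simp add: b)
qed

lemma exists_primitive_prime_divisor_two_pow_mult_ge_7:
  fixes q a c :: nat
  assumes q: "q \<ge> 2" and c: "prime c" "c \<ge> 7" and a: "a > 0"
  shows "\<exists>p. prime p \<and> ord p q = 2 ^ a * c"
proof (rule exists_primitive_prime_divisor_two_pow_mult_prime[OF q c(1) _ a])
  show "c \<noteq> 2"
    using c(2) by simp
  have "c < 2 ^ (c - 3)"
    using c(2)
  proof (induction c rule: dec_induct)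
    case (step n)
    then show ?case
      by (subst Suc_diff_le) auto
  qed simp
  then have "2 ^ a * c < 2 ^ (a + (c - 3))"
    by (simp add: power_add)
  also have "a + (c - 3) \<le> a * (c - 2)"
  proof -
    have "c - 2 = Suc (c - 3)"
      using c(2) by simp
    then have "a * (c - 2) = a * (c - 3) + a"
      by simp
    moreover have "c - 3 \<le> a * (c - 3)"
      using a by simp
    ultimately show ?thesis
      by simp
  qed
  also have "a * (c - 2) \<le> 2 ^ (a - 1) * (c - 2)"
    using a Suc_leI[OF less_exp[of "a - 1"]] by simp
  finally show "2 ^ a * c < 2 ^ (2 ^ (a - 1) * (c - 2))"
    by simp
qed

lemma exists_primitive_prime_divisor_two_pow:
  fixes q a :: nat
  assumes q: "q \<ge> 2" and a: "a \<ge> 3"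
  shows "\<exists>p. prime p \<and> ord p q = 2 ^ a"
proof (rule exists_primitive_prime_divisor_if_less_two_pow[OF q])
  obtain b where b: "a = Suc b"
    using a by (cases a) auto
  show "2 \<le> (2::nat) ^ a"
    using a by (simp add: b)
  have "a < 2 ^ b"
    using less_two_pow_pred[OF a] by (simp add: b)
  then have "(2::nat) ^ a < 2 ^ 2 ^ b"
    by (intro power_strict_increasing) auto
  moreover have "(\<Sum>r\<in>prime_factors ((2::nat) ^ a). 2 ^ a div r) = 2 ^ a div 2"
    using a by (simp add: prime_factors_two_pow)
  moreover have "(2::nat) ^ a - 2 ^ a div 2 = 2 ^ b"
    by (simp add: b)
  ultimately show "(2::nat) ^ a < 2 ^ (2 ^ a - (\<Sum>r\<in>prime_factors ((2::nat) ^ a). 2 ^ a div r))"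
    by simp
qed

lemma exists_primitive_prime_divisor_odd_prime:
  fixes q c :: nat
  assumes q: "q \<ge> 2" and c: "prime c" "c \<noteq> 2"
  shows "\<exists>p. prime p \<and> ord p q = c"
proof (rule exists_primitive_prime_divisor_if_less_two_pow[OF q])
  show "c \<ge> 2"
    using c prime_ge_2_nat by blast
  then have "c \<ge> 3"
    using c(2) by simp
  then have "c < 2 ^ (c - 1)"
    by (rule less_two_pow_pred)
  then show "c < 2 ^ (c - (\<Sum>r\<in>prime_factors c. c div r))"
    using c by (simp add: prime_prime_factors prime_gt_0_nat)
qed

lemma exists_primitive_prime_divisor_4:
  fixes q :: nat
  assumes q: "q \<ge> 2"
  shows "\<exists>p. prime p \<and> ord p q = 4"
proof (rule exists_primitive_prime_divisor_if_prod_less[OF q])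
  have "prime_factors (4::nat) = {2}"
    using prime_factors_two_pow[of 2] by simp
  have "q\<^sup>2 \<ge> 4"
    using power_mono[OF q, of 2] by simp
  then have "4 * q\<^sup>2 \<le> q\<^sup>2 * q\<^sup>2"
    by (rule mult_le_mono1)
  moreover have "q ^ 4 = q\<^sup>2 * q\<^sup>2"
    by (simp flip: power_add)
  ultimately have "4 * (q\<^sup>2 - 1) < q ^ 4 - 1"
    using \<open>q\<^sup>2 \<ge> 4\<close> by linarith
  then show "4 * (\<Prod>r\<in>prime_factors 4. q ^ (4 div r) - 1) < q ^ 4 - 1"
    using \<open>prime_factors 4 = {2}\<close> by simp
qed simp

lemma exists_primitive_prime_divisor_10:
  fixes q :: nat
  assumes q: "q \<ge> 2"
  shows "\<exists>p. prime p \<and> ord p q = 10"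
proof (rule exists_primitive_prime_divisor_if_prod_less[OF q])
  have "prime_factors (10::nat) = {2, 5}"
    using prime_factors_two_pow_mult_prime[of 5 1] by simp
  have "q ^ 5 \<ge> 32"
    using power_mono[OF q, of 5] by simp
  have "10 * (q ^ 2 - 1) < q ^ 5 + 1"
  proof (cases "q = 2")
    case False
    then have "q ^ 3 \<ge> 27"
      using power_mono[of 3 q 3] q by simp
    then have "27 * q ^ 2 \<le> q ^ 3 * q ^ 2"
      by (rule mult_le_mono1)
    also have "\<dots> = q ^ 5"
      by (simp flip: power_add)
    finally have "q ^ 5 \<ge> 27 * q ^ 2" .
    then show ?thesis
      by linarith
  qed simp
  then have "(q ^ 5 - 1) * (10 * (q ^ 2 - 1)) < (q ^ 5 - 1) * (q ^ 5 + 1)"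
    using \<open>q ^ 5 \<ge> 32\<close> by (intro mult_strict_left_mono) auto
  also have "(q ^ 5 - 1) * (q ^ 5 + 1) = (q ^ 5)\<^sup>2 - 1"
    by (rule square_minus_one_eq_nat[symmetric])
  also have "(q ^ 5)\<^sup>2 - 1 = q ^ 10 - 1"
    by (simp flip: power_mult)
  finally show "10 * (\<Prod>r\<in>prime_factors 10. q ^ (10 div r) - 1) < q ^ 10 - 1"
    using \<open>prime_factors 10 = {2, 5}\<close> by (simp add: ac_simps power2_eq_square)
qed simp

text \<open>Here the product bound fails, but the divisibility itself forces
  \<open>q\<^sup>2 - q + 1\<close>, a factor of \<open>q\<^sup>3 + 1\<close>, to divide \<open>6\<close>.\<close>

lemma exists_primitive_prime_divisor_6:
  fixes q :: nat
  assumes q: "q \<ge> 3"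
  shows "\<exists>p. prime p \<and> ord p q = 6"
proof (rule ccontr)
  assume no_prim: "\<nexists>p. prime p \<and> ord p q = 6"
  define Q F where "Q = int q" and "F = Q\<^sup>2 - Q + 1"
  have "Q \<ge> 3"
    using q by (simp add: Q_def)
  have "prime_factors (6::nat) = {2, 3}"
    using prime_factors_two_pow_mult_prime[of 3 1] by simp
  then have "q ^ 6 - 1 dvd 6 * ((q ^ 3 - 1) * (q\<^sup>2 - 1))"
    using pow_minus_one_dvd_if_no_primitive_prime_divisor[OF _ _ no_prim] q by simp
  then have "int (q ^ 6 - 1) dvd int (6 * ((q ^ 3 - 1) * (q\<^sup>2 - 1)))"
    by (simp only: of_nat_dvd_iff)
  moreover have "int (q ^ j - 1) = Q ^ j - 1" for j
    using q by (simp add: Q_def of_nat_diff)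
  ultimately have "Q ^ 6 - 1 dvd 6 * ((Q ^ 3 - 1) * (Q\<^sup>2 - 1))"
    by simp
  then have "(Q ^ 3 - 1) * (Q + 1) * F dvd (Q ^ 3 - 1) * (Q + 1) * (6 * (Q - 1))"
    by (simp add: F_def algebra_simps eval_nat_numeral)
  moreover have "Q ^ 3 \<ge> 3 ^ 3"
    using \<open>Q \<ge> 3\<close> by (intro power_mono) auto
  then have "(Q ^ 3 - 1) * (Q + 1) \<noteq> 0"
    using \<open>Q \<ge> 3\<close> by simp
  ultimately have "F dvd 6 * (Q - 1)"
    by simp
  then have "F dvd 6 * (Q - 1) * Q"
    by (rule dvd_mult2)
  then have "F dvd 6 * F - 6 * (Q - 1) * Q"
    by (rule dvd_diff[OF dvd_triv_right])
  moreover have "6 * F - 6 * (Q - 1) * Q = 6"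
    by (simp add: F_def algebra_simps power2_eq_square)
  ultimately have "F \<le> 6"
    by (simp add: zdvd_imp_le)
  moreover have "Q * (Q - 1) \<ge> 3 * 2"
    using \<open>Q \<ge> 3\<close> by (intro mult_mono) auto
  then have "F \<ge> 7"
    by (simp add: F_def power2_eq_square algebra_simps)
  ultimately show False
    by simp
qed

section \<open>Large prime divisors of the product\<close>

lemma twice_ord_dvd_prime_minus_one:
  fixes p q k :: nat
  assumes p: "prime p" and ord: "ord p q = k" and k: "odd k" "k > 1"
  shows "2 * k dvd p - 1"
proof (rule divides_mult)
  show "k dvd p - 1"
    using ord_dvd_prime_minus_one[OF p ord] k by simp
  then have "p \<noteq> 2"
    using k by auto
  then show "2 dvd p - 1"
    using prime_odd_nat[OF p] prime_ge_2_nat[OF p] by simp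
  show "coprime 2 k"
    using k by simp
qed

lemma twice_less_prime_if_dvd_pred:
  fixes p k :: nat
  assumes p: "prime p" and k: "k dvd p - 1" and ne: "p \<noteq> k + 1"
  shows "2 * k < p"
proof -
  obtain j where j: "p - 1 = k * j"
    using k by blast
  have "p \<ge> 2"
    using prime_ge_2_nat[OF p] .
  then have "j \<noteq> 0"
    using j by (intro notI) simp
  moreover have "j \<noteq> 1"
    using j ne \<open>p \<ge> 2\<close> by auto
  ultimately have "j \<ge> 2"
    by simp
  then have "k * 2 \<le> k * j"
    by simp
  then show ?thesis
    using j \<open>p \<ge> 2\<close> by linarith
qed

lemma exists_twice_less_of_two_primes:
  fixes p1 p2 d :: nat
  assumes "prime p1" "prime p2" "p1 \<noteq> p2" "d dvd p1 - 1" "d dvd p2 - 1"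
  shows "\<exists>p\<in>{p1, p2}. 2 * d < p"
  using assms twice_less_prime_if_dvd_pred by (cases "p1 = d + 1") auto

text \<open>The bound \<open>2 * m + 4\<close> stands for \<open>n + 2 \<le> 2 * m + 4\<close>, where \<open>m = \<lceil>(n - 2) / 2\<rceil>\<close>.\<close>

definition large_prime_divisors :: "nat \<Rightarrow> nat \<Rightarrow> nat set" where
  "large_prime_divisors m q = {p. prime p \<and> 2 * m + 4 < p \<and> p dvd (\<Prod>i=1..m. q ^ (2 * i) - 1)}"

lemma large_prime_divisorI:
  fixes p q m i :: nat
  assumes p: "prime p" "2 * m + 4 < p" and q: "q > 0" and i: "1 \<le> i" "i \<le> m"
    and ord: "ord p q dvd 2 * i"
  shows "p \<in> large_prime_divisors m q"
proof -
  have "p dvd q ^ (2 * i) - 1"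
    using ord prime_dvd_pow_minus_one_iff[OF q] by blast
  also have "q ^ (2 * i) - 1 dvd (\<Prod>i=1..m. q ^ (2 * i) - 1)"
    using i by (intro dvd_prodI) auto
  finally show ?thesis
    using p by (simp add: large_prime_divisors_def)
qed

definition admissible_order :: "nat \<Rightarrow> nat \<Rightarrow> bool" where
  "admissible_order m k \<longleftrightarrow> even k \<and> m + 2 \<le> k \<and> k \<le> 2 * m \<and> k mod 3 = 2"

text \<open>A prime of order \<open>k\<close> is \<open>1\<close> modulo \<open>k\<close>, and it is not \<open>k + 1\<close> because \<open>3\<close> divides
  \<open>k + 1\<close>; hence it exceeds \<open>2 * k \<ge> 2 * m + 4\<close>.\<close>

lemma large_prime_divisor_if_admissible_order:
  fixes p q m k :: nat
  assumes p: "prime p" and q: "q > 0" and ord: "ord p q = k" and k: "admissible_order m k"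
  shows "p \<in> large_prime_divisors m q"
proof -
  have "k dvd p - 1"
    using ord_dvd_prime_minus_one[OF p ord] k by (auto simp: admissible_order_def)
  moreover have "p \<noteq> k + 1"
  proof
    assume "p = k + 1"
    moreover have "3 dvd k + 1"
      using k unfolding admissible_order_def by presburger
    ultimately have "p = 3"
      using p by (auto simp: prime_nat_iff)
    then show False
      using k \<open>p = k + 1\<close> by (auto simp: admissible_order_def)
  qed
  ultimately have "2 * k < p"
    by (rule twice_less_prime_if_dvd_pred[OF p])
  then show ?thesis
    using k by (intro large_prime_divisorI[OF p _ q, of _ "k div 2"]) (auto simp: admissible_order_def ord)
qed

lemma two_large_prime_divisors_if_admissible_orders:
  fixes q m k1 k2 :: nat
  assumes q: "q > 0" and "k1 \<noteq> k2" and "admissible_order m k1" "admissible_order m k2"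
    and "\<exists>p. prime p \<and> ord p q = k1" "\<exists>p. prime p \<and> ord p q = k2"
  shows "\<exists>r s. r \<noteq> s \<and> {r, s} \<subseteq> large_prime_divisors m q"
proof -
  obtain r s where r: "prime r" "ord r q = k1" and s: "prime s" "ord s q = k2"
    using assms by blast
  then have "r \<noteq> s"
    using \<open>k1 \<noteq> k2\<close> by auto
  moreover have "{r, s} \<subseteq> large_prime_divisors m q"
    using r s assms large_prime_divisor_if_admissible_order[OF _ q] by auto
  ultimately show ?thesis
    by blast
qed

lemma exists_primitive_prime_divisor_dyadic:
  fixes q e i :: nat
  assumes q: "q \<ge> 2" and e: "e \<in> {56, 58, 62, 64, 68, 74, 76, 82}"
  shows "\<exists>p. prime p \<and> ord p q = e * 2 ^ i"
proof -
  have two_pow_mult: "\<exists>p. prime p \<and> ord p q = e * 2 ^ i"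
    if "e = 2 ^ t * c" "prime c" "c \<ge> 7" "t > 0" for t c
    using exists_primitive_prime_divisor_two_pow_mult_ge_7[OF q that(2,3), of "t + i"] that(1,4)
    by (simp add: power_add ac_simps)
  have "(64::nat) * 2 ^ i = 2 ^ (6 + i)"
    by (simp add: power_add)
  then show ?thesis
    using e exists_primitive_prime_divisor_two_pow[OF q, of "6 + i"]
      two_pow_mult[of 3 7] two_pow_mult[of 1 29] two_pow_mult[of 1 31] two_pow_mult[of 2 17]
      two_pow_mult[of 1 37] two_pow_mult[of 2 19] two_pow_mult[of 1 41]
    by auto
qed

lemma admissible_dyadic_pair:
  fixes m Y :: nat
  assumes m: "32 * Y \<le> m" "m < 64 * Y" and Y: "\<not> 3 dvd Y"
  shows "\<exists>e1 e2. e1 \<noteq> e2 \<and> {e1, e2} \<subseteq> {56, 58, 62, 64, 68, 74, 76, 82} \<and>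
           admissible_order m (e1 * Y) \<and> admissible_order m (e2 * Y)"
proof -
  have adm: "admissible_order m (e * Y)"
    if "even e" "m + 2 \<le> e * Y" "e * Y \<le> 2 * m" "(e * (Y mod 3)) mod 3 = 2" for e
    using that by (simp add: admissible_order_def mod_mult_right_eq)
  have pair: "\<exists>e1 e2. e1 \<noteq> e2 \<and> {e1, e2} \<subseteq> {56, 58, 62, 64, 68, 74, 76, 82} \<and>
           admissible_order m (e1 * Y) \<and> admissible_order m (e2 * Y)"
    if "e1 \<noteq> e2" "{e1, e2} \<subseteq> {56, 58, 62, 64, 68, 74, 76, 82}"
      "admissible_order m (e1 * Y)" "admissible_order m (e2 * Y)" for e1 e2
    using that by blast
  have "Y mod 3 \<noteq> 0" "Y mod 3 < 3"
    using Y by (simp_all add: dvd_eq_mod_eq_0)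
  then consider "Y mod 3 = 1" | "Y mod 3 = 2"
    by linarith
  then show ?thesis
  proof cases
    case 1
    show ?thesis
    proof (cases "m < 55 * Y")
      case True
      then show ?thesis
        using m 1 by (intro pair[of 56 62] adm) simp_all
    next
      case False
      then show ?thesis
        using m 1 by (intro pair[of 68 74] adm) simp_all
    qed
  next
    case 2
    show ?thesis
    proof (cases "m < 57 * Y")
      case True
      then show ?thesis
        using m 2 by (intro pair[of 58 64] adm) simp_all
    next
      case False
      then show ?thesis
        using m 2 by (intro pair[of 76 82] adm) simp_all
    qed
  qed
qed

lemma not_three_dvd_two_pow: "\<not> 3 dvd (2::nat) ^ i"
  using prime_dvd_power_nat[of 3 2 i] by auto

lemma two_large_prime_divisors_ge_32:
  fixes q m :: nat
  assumes q: "q \<ge> 2" and m: "m \<ge> 32"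
  shows "\<exists>r s. r \<noteq> s \<and> {r, s} \<subseteq> large_prime_divisors m q"
proof -
  obtain j where j: "2 ^ j \<le> m" "m < 2 ^ (j + 1)"
    using ex_power_ivl1[of 2 m] m by auto
  have "\<not> j < 5"
  proof
    assume "j < 5"
    then have "(2::nat) ^ (j + 1) \<le> 2 ^ 5"
      by (intro power_increasing) auto
    then show False
      using j m by simp
  qed
  then obtain i where "j = i + 5"
    by (intro that[of "j - 5"]) simp
  then have bounds: "32 * 2 ^ i \<le> m" "m < 64 * 2 ^ i"
    using j by (simp_all add: power_add)
  obtain e1 e2 where e: "e1 \<noteq> e2" "{e1, e2} \<subseteq> {56, 58, 62, 64, 68, 74, 76, 82}"
      and adm: "admissible_order m (e1 * 2 ^ i)" "admissible_order m (e2 * 2 ^ i)"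
    using admissible_dyadic_pair[OF bounds not_three_dvd_two_pow] by (elim exE conjE) (rule that)
  have "\<exists>p. prime p \<and> ord p q = e1 * 2 ^ i" "\<exists>p. prime p \<and> ord p q = e2 * 2 ^ i"
    using e(2) by (intro exists_primitive_prime_divisor_dyadic[OF q]; blast)+
  moreover have "e1 * 2 ^ i \<noteq> e2 * 2 ^ i"
    using e(1) by simp
  ultimately show ?thesis
    using q by (intro two_large_prime_divisors_if_admissible_orders[OF _ _ adm]) simp_all
qed

lemma exists_primitive_prime_divisor_14_to_44:
  fixes q k :: nat
  assumes q: "q \<ge> 2" and k: "k \<in> {14, 20, 26, 32, 38, 44}"
  shows "\<exists>p. prime p \<and> ord p q = k"
proof -
  note two_pow_mult = exists_primitive_prime_divisor_two_pow_mult_ge_7[OF q]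
  have "\<exists>p. prime p \<and> ord p q = 14"
    using two_pow_mult[of 7 1] by simp
  moreover have "\<exists>p. prime p \<and> ord p q = 20"
    using exists_primitive_prime_divisor_two_pow_mult_prime[OF q, of 5 2] by simp
  moreover have "\<exists>p. prime p \<and> ord p q = 26"
    using two_pow_mult[of 13 1] by simp
  moreover have "\<exists>p. prime p \<and> ord p q = 32"
    using exists_primitive_prime_divisor_two_pow[OF q, of 5] by simp
  moreover have "\<exists>p. prime p \<and> ord p q = 38"
    using two_pow_mult[of 19 1] by simp
  moreover have "\<exists>p. prime p \<and> ord p q = 44"
    using two_pow_mult[of 11 2] by simp
  ultimately show ?thesis
    using k by auto
qed

lemma two_large_prime_divisors_10_to_31:
  fixes q m :: nat
  assumes q: "q \<ge> 2" and m: "10 \<le> m" "m \<le> 31"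
  shows "\<exists>r s. r \<noteq> s \<and> {r, s} \<subseteq> large_prime_divisors m q"
proof -
  have pair: "\<exists>r s. r \<noteq> s \<and> {r, s} \<subseteq> large_prime_divisors m q"
    if k: "k1 \<in> {14, 20, 26, 32, 38, 44}" "k2 \<in> {14, 20, 26, 32, 38, 44}"
      and "k2 = k1 + 6" "m + 2 \<le> k1" "k2 \<le> 2 * m" for k1 k2
  proof (rule two_large_prime_divisors_if_admissible_orders)
    show "\<exists>p. prime p \<and> ord p q = k1" "\<exists>p. prime p \<and> ord p q = k2"
      using k by (auto intro: exists_primitive_prime_divisor_14_to_44[OF q])
    show "admissible_order m k1" "admissible_order m k2"
      using that by (auto simp: admissible_order_def)
  qed (use q that in auto)
  consider "m \<le> 12" | "13 \<le> m" "m \<le> 18" | "19 \<le> m" "m \<le> 24" | "25 \<le> m" "m \<le> 30" | "m = 31"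
    using m by linarith
  then show ?thesis
  proof cases
    case 1
    then show ?thesis using m by (intro pair[of 14 20]) auto
  next
    case 2
    then show ?thesis by (intro pair[of 20 26]) auto
  next
    case 3
    then show ?thesis by (intro pair[of 26 32]) auto
  next
    case 4
    then show ?thesis by (intro pair[of 32 38]) auto
  next
    case 5
    then show ?thesis by (intro pair[of 38 44]) auto
  qed
qed

lemma two_large_prime_divisors_7_to_9:
  fixes q m :: nat
  assumes q: "q \<ge> 2" and m: "7 \<le> m" "m \<le> 9"
  shows "\<exists>r s. r \<noteq> s \<and> {r, s} \<subseteq> large_prime_divisors m q"
proof -
  obtain r where r: "prime r" "ord r q = 7"
    using exists_primitive_prime_divisor_odd_prime[OF q, of 7] by auto
  have "2 * 7 dvd r - 1"
    using twice_ord_dvd_prime_minus_one[OF r] by simp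
  moreover have "r \<noteq> 2 * 7 + 1"
    using r(1) by auto
  ultimately have "2 * (2 * 7) < r"
    using twice_less_prime_if_dvd_pred[OF r(1)] by blast
  then have "r \<in> large_prime_divisors m q"
    using r q m by (intro large_prime_divisorI[where i = 7]) auto
  moreover obtain s where s: "prime s" "ord s q = 2 ^ 1 * 7"
    using exists_primitive_prime_divisor_two_pow_mult_ge_7[OF q, of 7 1] by auto
  then have "s \<in> large_prime_divisors m q"
    using q m by (intro large_prime_divisor_if_admissible_order) (auto simp: admissible_order_def)
  moreover have "r \<noteq> s"
    using r s by auto
  ultimately show ?thesis
    by blast
qed

lemma two_large_prime_divisors_5_to_6:
  fixes q m :: nat
  assumes q: "q \<ge> 2" and m: "5 \<le> m" "m \<le> 6"
  shows "\<exists>r s. r \<noteq> s \<and> {r, s} \<subseteq> large_prime_divisors m q"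
proof -
  obtain r where r: "prime r" "ord r q = 2 ^ 3"
    using exists_primitive_prime_divisor_two_pow[OF q, of 3] by auto
  then have "r \<in> large_prime_divisors m q"
    using q m by (intro large_prime_divisor_if_admissible_order) (auto simp: admissible_order_def)
  obtain p5 where p5: "prime p5" "ord p5 q = 5"
    using exists_primitive_prime_divisor_odd_prime[OF q, of 5] by auto
  obtain p10 where p10: "prime p10" "ord p10 q = 10"
    using exists_primitive_prime_divisor_10[OF q] by auto
  have "10 dvd p5 - 1" "10 dvd p10 - 1"
    using twice_ord_dvd_prime_minus_one[OF p5] ord_dvd_prime_minus_one[OF p10] by simp_all
  moreover have "p5 \<noteq> p10"
    using p5 p10 by auto
  ultimately obtain s where "s \<in> {p5, p10}" "2 * 10 < s"
    using exists_twice_less_of_two_primes[OF p5(1) p10(1)] by blast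
  then have "s \<in> large_prime_divisors m q" "r \<noteq> s"
    using p5 p10 q m r by (auto intro!: large_prime_divisorI[where i = 5])
  with \<open>r \<in> large_prime_divisors m q\<close> show ?thesis
    by blast
qed

lemma two_large_prime_divisors_4:
  fixes q :: nat
  assumes q: "q \<ge> 3"
  shows "\<exists>r s. r \<noteq> s \<and> {r, s} \<subseteq> large_prime_divisors 4 q"
proof -
  obtain r where r: "prime r" "ord r q = 2 ^ 3"
    using exists_primitive_prime_divisor_two_pow[of q 3] q by auto
  then have "r \<in> large_prime_divisors 4 q"
    using q by (intro large_prime_divisor_if_admissible_order) (auto simp: admissible_order_def)
  obtain p3 where p3: "prime p3" "ord p3 q = 3"
    using exists_primitive_prime_divisor_odd_prime[of q 3] q by auto
  obtain p6 where p6: "prime p6" "ord p6 q = 6"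
    using exists_primitive_prime_divisor_6[OF q] by auto
  have "6 dvd p3 - 1" "6 dvd p6 - 1"
    using twice_ord_dvd_prime_minus_one[OF p3] ord_dvd_prime_minus_one[OF p6] by simp_all
  moreover have "p3 \<noteq> p6"
    using p3 p6 by auto
  ultimately obtain s where "s \<in> {p3, p6}" "2 * 6 < s"
    using exists_twice_less_of_two_primes[OF p3(1) p6(1)] by blast
  then have "s \<in> large_prime_divisors 4 q" "r \<noteq> s"
    using p3 p6 q r by (auto intro!: large_prime_divisorI[where i = 3])
  with \<open>r \<in> large_prime_divisors 4 q\<close> show ?thesis
    by blast
qed

section \<open>Numbers whose only prime factors are 2 and 3\<close>

lemma eq_prime_power_if_prime_factors_subset:
  fixes n r :: nat
  assumes n: "n > 0" and sub: "prime_factors n \<subseteq> {r}"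
  shows "n = r ^ multiplicity r n"
proof (cases "r \<in> prime_factors n")
  case True
  then have "prime_factors n = {r}"
    using sub by auto
  then show ?thesis
    using prod_prime_factors[of n] n by simp
next
  case False
  then have "prime_factorization n = {#}"
    using sub by auto
  then have "n = 1"
    using n by (simp add: prime_factorization_empty_iff)
  then show ?thesis
    by simp
qed

lemma three_pow_mod_8: "(3::nat) ^ b mod 8 = (if even b then 1 else 3)"
proof (induction b)
  case (Suc b)
  have "(3::nat) ^ Suc b mod 8 = 3 * (3 ^ b mod 8) mod 8"
    by (simp add: mod_mult_right_eq)
  with Suc show ?case
    by auto
qed simp

lemma three_pow_plus_one_eq_two_pow:
  fixes b c :: nat
  assumes eq: "(3::nat) ^ b + 1 = 2 ^ c"
  shows "b = 0 \<and> c = 1 \<or> b = 1 \<and> c = 2"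
proof -
  have "\<not> 3 \<le> c"
  proof
    assume "3 \<le> c"
    then have "(2::nat) ^ 3 dvd 2 ^ c"
      by (rule le_imp_power_dvd)
    define x where "x = (3::nat) ^ b"
    have "8 dvd x + 1"
      unfolding x_def eq using \<open>2 ^ 3 dvd 2 ^ c\<close> by simp
    moreover have "x mod 8 = 1 \<or> x mod 8 = 3"
      unfolding x_def using three_pow_mod_8[of b] by simp
    ultimately show False
      by presburger
  qed
  then consider "c = 0" | "c = 1" | "c = 2"
    by linarith
  then show ?thesis
    using eq power_inject_exp[of 3 b 1] by cases auto
qed

lemma three_pow_eq_two_pow_plus_one:
  fixes d j :: nat
  assumes eq: "(3::nat) ^ d = 2 ^ j + 1"
  shows "d = 1 \<and> j = 1 \<or> d = 2 \<and> j = 3"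
proof (cases "2 \<le> j")
  case True
  then have "(2::nat) ^ 2 dvd 2 ^ j"
    by (rule le_imp_power_dvd)
  define x where "x = (3::nat) ^ d"
  have "4 dvd x - 1"
    unfolding x_def eq using \<open>2 ^ 2 dvd 2 ^ j\<close> by simp
  moreover have "odd d \<Longrightarrow> x mod 8 = 3"
    unfolding x_def using three_pow_mod_8[of d] by simp
  ultimately have "even d"
    by presburger
  then obtain f where d: "d = 2 * f"
    by blast
  have "(3 ^ f - 1) * (3 ^ f + 1) = ((3::nat) ^ f)\<^sup>2 - 1"
    by (rule square_minus_one_eq_nat[symmetric])
  also have "\<dots> = 3 ^ d - 1"
    by (metis d power_mult mult.commute)
  also have "\<dots> = 2 ^ j"
    using eq by simp
  finally have "(3 ^ f - 1) * (3 ^ f + 1) = (2::nat) ^ j" .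
  then have "3 ^ f + 1 dvd (2::nat) ^ j"
    by (metis dvd_triv_right)
  then obtain i where "3 ^ f + 1 = (2::nat) ^ i"
    using divides_primepow_nat[of 2] by auto
  then have "f = 0 \<or> f = 1"
    using three_pow_plus_one_eq_two_pow by blast
  then show ?thesis
    using eq d power_inject_exp[of 2 j 3] by auto
next
  case False
  then consider "j = 0" | "j = 1"
    by linarith
  moreover have "odd ((3::nat) ^ d)"
    by simp
  ultimately show ?thesis
    using eq power_inject_exp[of 3 d 1] by cases auto
qed

text \<open>Of two consecutive numbers one is odd, hence a power of \<open>3\<close>, and the other is then
  prime to \<open>3\<close>, hence a power of \<open>2\<close>.\<close>

lemma consecutive_two_three_smooth:
  fixes n :: nat
  assumes n: "n > 0" and smooth: "prime_factors n \<subseteq> {2, 3}" "prime_factors (n + 1) \<subseteq> {2, 3}"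
  shows "n \<in> {1, 2, 3, 8}"
proof -
  have pow3: "x = 3 ^ multiplicity 3 x" if "odd x" "x > 0" "prime_factors x \<subseteq> {2, 3}" for x :: nat
    using that by (intro eq_prime_power_if_prime_factors_subset) (auto simp: in_prime_factors_iff)
  have pow2: "x = 2 ^ multiplicity 2 x" if "\<not> 3 dvd x" "x > 0" "prime_factors x \<subseteq> {2, 3}" for x :: nat
    using that by (intro eq_prime_power_if_prime_factors_subset) (auto simp: in_prime_factors_iff)
  show ?thesis
  proof (cases "even n")
    case True
    define b where "b = multiplicity 3 (n + 1)"
    have b: "n + 1 = 3 ^ b"
      unfolding b_def using True smooth(2) by (intro pow3) auto
    then have "b \<noteq> 0"
      using n by (intro notI) simp
    then have "3 dvd n + 1"
      unfolding b by simp
    then have "n = 2 ^ multiplicity 2 n"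
      using n smooth(1) by (intro pow2) presburger+
    then show ?thesis
      using three_pow_eq_two_pow_plus_one[of b "multiplicity 2 n"] b by auto
  next
    case False
    define b where "b = multiplicity 3 n"
    have b: "n = 3 ^ b"
      unfolding b_def using False n smooth(1) by (intro pow3) auto
    show ?thesis
    proof (cases "b = 0")
      case True
      then show ?thesis
        using b by simp
    next
      case False
      then have "3 dvd n"
        unfolding b by simp
      then have "n + 1 = 2 ^ multiplicity 2 (n + 1)"
        using smooth(2) by (intro pow2) presburger+
      then show ?thesis
        using three_pow_plus_one_eq_two_pow[of b "multiplicity 2 (n + 1)"] b by auto
    qed
  qed
qed

lemma square_minus_one_two_three_smooth:
  fixes q :: nat
  assumes q: "q \<ge> 2" and smooth: "prime_factors (q\<^sup>2 - 1) \<subseteq> {2, 3}"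
  shows "q \<in> {2, 3, 5, 7, 17}"
proof -
  have "q\<^sup>2 \<ge> 2\<^sup>2"
    using q by (rule power_mono) simp
  then have "q\<^sup>2 - 1 \<noteq> 0"
    by simp
  then have smooth_dvd: "prime_factors x \<subseteq> {2, 3}" if "x dvd q\<^sup>2 - 1" for x
    using that smooth dvd_prime_factors by blast
  have fac: "q\<^sup>2 - 1 = (q - 1) * (q + 1)"
    by (rule square_minus_one_eq_nat)
  show ?thesis
  proof (cases "even q")
    case True
    have "\<not> 3 dvd q - 1 \<or> \<not> 3 dvd q + 1"
      using q by presburger
    then obtain w where w: "w = q - 1 \<or> w = q + 1" "\<not> 3 dvd w"
      by blast
    have "w dvd q\<^sup>2 - 1"
      using w(1) unfolding fac by (auto simp del: mult_Suc_right)
    then have "prime_factors w \<subseteq> {2, 3}"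
      by (rule smooth_dvd)
    moreover have "odd w" "w > 0"
      using w(1) True q by auto
    ultimately have "w = 3 ^ multiplicity 3 w"
      by (intro eq_prime_power_if_prime_factors_subset) (auto simp: in_prime_factors_iff)
    then have "w = 1"
      using w(2) by (simp add: not_dvd_imp_multiplicity_0)
    then show ?thesis
      using w(1) q by auto
  next
    case False
    define n where "n = (q - 1) div 2"
    have n: "q - 1 = 2 * n" "q + 1 = 2 * (n + 1)" "n > 0"
      using False q by (auto simp: n_def elim!: oddE)
    then have q_sq: "q\<^sup>2 - 1 = (4 * n) * (n + 1)"
      using fac by simp
    have "n dvd q\<^sup>2 - 1" "n + 1 dvd q\<^sup>2 - 1"
      unfolding q_sq by (rule dvd_mult2[OF dvd_triv_right], rule dvd_triv_right)
    then have "prime_factors n \<subseteq> {2, 3}" "prime_factors (n + 1) \<subseteq> {2, 3}"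
      by (simp_all add: smooth_dvd)
    then have "n \<in> {1, 2, 3, 8}"
      using consecutive_two_three_smooth \<open>n > 0\<close> by blast
    then show ?thesis
      using n q by auto
  qed
qed

section \<open>The case \<open>m = 3\<close> and the theorem\<close>

lemma prime_le_10:
  fixes p :: nat
  assumes "prime p" "p \<le> 10"
  shows "p \<in> {2, 3, 5, 7}"
proof -
  have "p = 0 \<or> p = 1 \<or> p = 2 \<or> p = 3 \<or> p = 4 \<or> p = 5 \<or> p = 6 \<or> p = 7 \<or> p = 8 \<or> p = 9 \<or> p = 10"
    using assms(2) by presburger
  then show ?thesis
    using assms(1) by (elim disjE) simp_all
qed

lemma exists_large_prime_dvd_square_minus_one:
  fixes q :: nat
  assumes q: "q \<ge> 4" "q \<noteq> 17" and ord5: "ord 5 q = 4" and ord7: "ord 7 q \<in> {3, 6}"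
  shows "\<exists>p. prime p \<and> 10 < p \<and> p dvd q\<^sup>2 - 1"
proof (rule ccontr)
  assume none: "\<nexists>p. prime p \<and> 10 < p \<and> p dvd q\<^sup>2 - 1"
  have smooth: "prime_factors (q\<^sup>2 - 1) \<subseteq> {2, 3}"
  proof
    fix p
    assume "p \<in> prime_factors (q\<^sup>2 - 1)"
    then have p: "prime p" "p dvd q\<^sup>2 - 1"
      by auto
    then have "p \<le> 10"
      using none by (intro leI notI) blast
    then have "p \<in> {2, 3, 5, 7}"
      using prime_le_10 p(1) by blast
    moreover have "ord p q dvd 2"
      using p(2) prime_dvd_pow_minus_one_iff[of q] q by simp
    then have "p \<noteq> 5" "p \<noteq> 7"
      using ord5 ord7 by auto
    ultimately show "p \<in> {2, 3}"
      by auto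
  qed
  have "q \<in> {2, 3, 5, 7, 17}"
    by (rule square_minus_one_two_three_smooth[OF _ smooth]) (use q in simp)
  moreover have "q \<noteq> 5" "q \<noteq> 7"
    using ord5 ord7 by auto
  ultimately show False
    using q by auto
qed

lemma two_large_prime_divisors_3_17: "\<exists>r s. r \<noteq> s \<and> {r, s} \<subseteq> large_prime_divisors 3 17"
proof -
  have ord29: "ord 29 (17::nat) dvd 2 * 2" and ord307: "ord 307 (17::nat) dvd 2 * 3"
    using prime_dvd_pow_minus_one_iff[of 17 29 4] prime_dvd_pow_minus_one_iff[of 17 307 6]
    by simp_all
  have "29 \<in> large_prime_divisors 3 17"
    by (rule large_prime_divisorI[OF _ _ _ _ _ ord29]) simp_all
  moreover have "307 \<in> large_prime_divisors 3 17"
    by (rule large_prime_divisorI[OF _ _ _ _ _ ord307]) simp_all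
  ultimately show ?thesis
    by (intro exI[of _ 29] exI[of _ 307]) simp
qed

text \<open>When \<open>7\<close> is one of the primes of order \<open>3\<close> or \<open>6\<close>, the second large prime has order \<open>4\<close>
  (such a prime is \<open>5\<close> or at least \<open>13\<close>) or divides \<open>q\<^sup>2 - 1\<close>.\<close>

lemma two_large_prime_divisors_3_if_seven:
  fixes q B :: nat
  assumes q: "q \<ge> 4" "q \<noteq> 17" and ord7: "ord 7 q \<in> {3, 6}"
    and B: "B \<in> large_prime_divisors 3 q" "ord B q \<in> {3, 6}"
  shows "\<exists>r s. r \<noteq> s \<and> {r, s} \<subseteq> large_prime_divisors 3 q"
proof -
  obtain p4 where p4: "prime p4" "ord p4 q = 4"
    using exists_primitive_prime_divisor_4[of q] q by auto
  show ?thesis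
  proof (cases "p4 = 5")
    case False
    have "4 dvd p4 - 1"
      using ord_dvd_prime_minus_one[OF p4] by simp
    then have "2 * 4 < p4"
      using twice_less_prime_if_dvd_pred[OF p4(1) \<open>4 dvd p4 - 1\<close>] False by simp
    moreover have "p4 \<noteq> 9"
      using p4(1) by auto
    moreover have "p4 \<noteq> 10"
      using \<open>4 dvd p4 - 1\<close> by auto
    ultimately have "p4 \<in> large_prime_divisors 3 q"
      using p4 q by (intro large_prime_divisorI[where i = 2]) auto
    moreover have "p4 \<noteq> B"
      using p4 B(2) by auto
    ultimately show ?thesis
      using B(1) by blast
  next
    case True
    then obtain p where p: "prime p" "10 < p" "p dvd q\<^sup>2 - 1"
      using exists_large_prime_dvd_square_minus_one[OF q _ ord7] p4 by blast
    then have "ord p q dvd 2 * 1"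
      using prime_dvd_pow_minus_one_iff[of q] q by simp
    then have "p \<in> large_prime_divisors 3 q" "p \<noteq> B"
      using p q B(2) by (auto intro: large_prime_divisorI)
    then show ?thesis
      using B(1) by blast
  qed
qed

lemma two_large_prime_divisors_3:
  fixes q :: nat
  assumes q: "q \<ge> 4"
  shows "\<exists>r s. r \<noteq> s \<and> {r, s} \<subseteq> large_prime_divisors 3 q"
proof (cases "q = 17")
  case False
  obtain p3 where p3: "prime p3" "ord p3 q = 3"
    using exists_primitive_prime_divisor_odd_prime[of q 3] q by auto
  obtain p6 where p6: "prime p6" "ord p6 q = 6"
    using exists_primitive_prime_divisor_6[of q] q by auto
  have "p3 \<noteq> p6"
    using p3 p6 by auto
  have large: "p \<in> large_prime_divisors 3 q"
    if p: "prime p" "ord p q \<in> {3, 6}" "p \<noteq> 7" for p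
  proof (rule large_prime_divisorI[where i = 3])
    have "6 dvd p - 1"
      using p twice_ord_dvd_prime_minus_one[of p q 3] ord_dvd_prime_minus_one[of p q 6] by auto
    then show "2 * 3 + 4 < p"
      using twice_less_prime_if_dvd_pred[OF p(1)] p(3) by fastforce
    show "ord p q dvd 2 * 3"
      using p(2) by auto
  qed (use p q in auto)
  show ?thesis
  proof (cases "p3 = 7 \<or> p6 = 7")
    case True
    then obtain B where "prime B" "ord B q \<in> {3, 6}" "B \<noteq> 7" "ord 7 q \<in> {3, 6}"
      using p3 p6 \<open>p3 \<noteq> p6\<close> by (metis insertI1 insert_commute)
    then show ?thesis
      using two_large_prime_divisors_3_if_seven[OF q False] large by blast
  next
    case False
    then show ?thesis
      using large p3 p6 \<open>p3 \<noteq> p6\<close> by blast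
  qed
next
  case True
  then show ?thesis
    using two_large_prime_divisors_3_17 by simp
qed

theorem two_large_prime_divisors:
  fixes q m :: nat
  assumes q: "q \<ge> 2" and m: "m \<ge> 3" and not_exc: "(m, q) \<notin> {(4, 2), (3, 2), (3, 3)}"
  shows "\<exists>r s. r \<noteq> s \<and> {r, s} \<subseteq> large_prime_divisors m q"
proof -
  consider "m \<ge> 32" | "10 \<le> m" "m \<le> 31" | "7 \<le> m" "m \<le> 9" | "5 \<le> m" "m \<le> 6"
    | "m = 4" | "m = 3"
    using m by linarith
  then show ?thesis
  proof cases
    case 1
    then show ?thesis using two_large_prime_divisors_ge_32[OF q] by blast
  next
    case 2
    then show ?thesis using two_large_prime_divisors_10_to_31[OF q] by blast
  next
    case 3
    then show ?thesis using two_large_prime_divisors_7_to_9[OF q] by blast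
  next
    case 4
    then show ?thesis using two_large_prime_divisors_5_to_6[OF q] by blast
  next
    case 5
    then show ?thesis using two_large_prime_divisors_4[of q] q not_exc by simp
  next
    case 6
    then show ?thesis using two_large_prime_divisors_3[of q] q not_exc by simp
  qed
qed

lemma nat_ceiling_half_minus_one:
  fixes n :: nat
  assumes "n \<ge> 2"
  shows "nat \<lceil>(real n - 2) / 2\<rceil> = (n - 1) div 2"
proof (cases "even n")
  case True
  then obtain t where t: "n = 2 * t"
    by blast
  then have "(real n - 2) / 2 = real_of_int (int t - 1)"
    by simp
  then have "\<lceil>(real n - 2) / 2\<rceil> = int t - 1"
    by (simp only: ceiling_of_int)
  then show ?thesis
    using t assms by simp
next
  case False
  then obtain t where t: "n = 2 * t + 1"
    using oddE by blast
  have "\<lceil>(real n - 2) / 2\<rceil> = int t"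
    using t by (intro ceiling_unique) simp_all
  then show ?thesis
    using t by simp
qed

theorem lemma4p2:
  fixes q n :: nat
  assumes "prime_power q" and "n \<ge> 7"
  shows "(n, q) \<in> {(10,2), (9,2), (8,3), (8,2), (7,3), (7,2)} \<or>
         (\<exists>r s. prime r \<and> prime s \<and> r \<noteq> s \<and> r > n + 2 \<and> s > n + 2 \<and>
            (let m = nat (ceiling ((real n - 2) / 2)) in
               r dvd (\<Prod>i=1..m. q ^ (2*i) - 1) \<and> s dvd (\<Prod>i=1..m. q ^ (2*i) - 1)))"
proof -
  obtain p k where "prime p" "k \<ge> 1" "q = p ^ k"
    using assms(1) unfolding prime_power_def by blast
  then have q: "q \<ge> 2"
    using prime_ge_2_nat[of p] self_le_power[of p k] by simp
  define m where "m = (n - 1) div 2"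
  have m_eq: "nat \<lceil>(real n - 2) / 2\<rceil> = m"
    unfolding m_def using assms(2) by (intro nat_ceiling_half_minus_one) simp
  have "n + 2 \<le> 2 * m + 4" "m \<ge> 3"
    unfolding m_def using assms(2) by presburger+
  show ?thesis
  proof (cases "(m, q) \<in> {(4, 2), (3, 2), (3, 3)}")
    case True
    then have "m = 4 \<and> q = 2 \<or> m = 3 \<and> (q = 2 \<or> q = 3)"
      by auto
    moreover have "m = 4 \<Longrightarrow> n = 9 \<or> n = 10" "m = 3 \<Longrightarrow> n = 7 \<or> n = 8"
      unfolding m_def using assms(2) by presburger+
    ultimately show ?thesis
      by auto
  next
    case False
    then obtain r s where "r \<noteq> s" "r \<in> large_prime_divisors m q" "s \<in> large_prime_divisors m q"
      using two_large_prime_divisors[OF q \<open>m \<ge> 3\<close>] by blast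
    then show ?thesis
      using \<open>n + 2 \<le> 2 * m + 4\<close> unfolding m_eq Let_def large_prime_divisors_def
      by (intro disjI2 exI[of _ r] exI[of _ s]) simp
  qed
qed

end
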